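(* Let $n,m\geq 1$ be integers, $\theta>0$, and $p,q\in\Lambda_{n,m,\theta}$. For $0<\xi<\xi'$ set $$ \langle p,q\rangle^{\prime,(\xi,\xi')}_{n,m,\theta}=\frac{1}{n!\,m!}\int_{T^n_\xi}d\omega_n(z)\int_{T^m_{\xi'}}d\omega_m(w)\,\Delta_{n,m}(z,w;\theta)\,p(z,w)\,q^*(z,w). $$ Then the value of $\langle p,q\rangle^{\prime,(\xi,\xi')}_{n,m,\theta}$ is independent of $\xi,\xi'>0$, provided that $\xi'>\xi$.
   Context: Variables $z=(z_1,\ldots,z_n)$, $w=(w_1,\ldots,w_m)$. $\Lambda_{n,m,\theta}$ denotes the algebra of all complex polynomials $p(z,w)$ that are symmetric in $z$ (under $S_n$), symmetric in $w$ (under $S_m$), and satisfy the quasi-invariance condition $\big(\frac{\partial}{\partial z_j}+\theta\frac{\partial}{\partial w_k}\big)p(z,w)\big|_{z_j=w_k}\equiv 0$ for all $j=1,\ldots,n$, $k=1,\ldots,m$. For $\xi>0$, $T^n_\xi=\{z\in\mathbb{C}^n:|z_j|=\xi,\ j=1,\ldots,n\}$, and $d\omega_n(z)=\frac{1}{(2\pi i)^n}\frac{dz_1}{z_1}\cdots\frac{dz_n}{z_n}$ (positively oriented circles). For $\theta>0$, $\Delta_n(z;\theta)=\prod_{1\leq j<k\leq n}\big[(1-z_j/z_k)(1-z_k/z_j)\big]^\theta$ (on $T^n_\xi$ the bracket equals $|1-z_j/z_k|^2\geq 0$ and the nonnegative real power is taken), and $$ \Delta_{n,m}(z,w;\theta)=\frac{\Delta_n(z;\theta)\,\Delta_m(w;1/\theta)}{\prod_{j=1}^n\prod_{k=1}^m(1-z_j/w_k)(1-w_k/z_j)}.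 $$ For a rational function $f\in\mathbb{C}(z,w)$, its conjugate is $f^*(z,w)=\overline{f(\bar z^{-1},\bar w^{-1})}$, where $\bar z^{-1}=(1/\bar z_1,\ldots,1/\bar z_n)$ and $\bar w^{-1}=(1/\bar w_1,\ldots,1/\bar w_m)$. *)

theory Defs
  imports "HOL-Analysis.Analysis"
begin

text \<open>Points of C^n and C^m are represented as functions nat => complex;
  only the coordinates 0..<n (resp. 0..<m) are relevant.\<close>

type_synonym cpt = "nat \<Rightarrow> complex"

definition poly_fun :: "nat \<Rightarrow> nat \<Rightarrow> (cpt \<Rightarrow> cpt \<Rightarrow> complex) \<Rightarrow> bool" where
  "poly_fun n m p \<longleftrightarrow>
     (\<exists>(E :: ((nat \<Rightarrow> nat) \<times> (nat \<Rightarrow> nat)) set) (c :: (nat \<Rightarrow> nat) \<times> (nat \<Rightarrow> nat) \<Rightarrow> complex).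
        finite E \<and>
        (\<forall>z w. p z w = (\<Sum>e\<in>E. c e * (\<Prod>j<n. z j ^ fst e j) * (\<Prod>k<m. w k ^ snd e k))))"

definition Lambda :: "nat \<Rightarrow> nat \<Rightarrow> real \<Rightarrow> (cpt \<Rightarrow> cpt \<Rightarrow> complex) set" where
  "Lambda n m \<theta> = {p. poly_fun n m p
     \<and> (\<forall>\<sigma> z w. \<sigma> permutes {..<n} \<longrightarrow> p (z \<circ> \<sigma>) w = p z w)
     \<and> (\<forall>\<sigma> z w. \<sigma> permutes {..<m} \<longrightarrow> p z (w \<circ> \<sigma>) = p z w)
     \<and> (\<forall>j<n. \<forall>k<m. \<forall>z w. z j = w k \<longrightarrow>
          deriv (\<lambda>t. p (z(j := t)) w) (z j) + complex_of_real \<theta> * deriv (\<lambda>t. p z (w(k := t))) (w k) = 0)}"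

definition conj_fun :: "(cpt \<Rightarrow> cpt \<Rightarrow> complex) \<Rightarrow> cpt \<Rightarrow> cpt \<Rightarrow> complex" where
  "conj_fun f z w = cnj (f (\<lambda>j. 1 / cnj (z j)) (\<lambda>k. 1 / cnj (w k)))"

text \<open>Delta_n(z;theta) on the torus: product over j<k of |1 - z_j/z_k|^(2 theta),
  the nonnegative real power of (1-z_j/z_k)(1-z_k/z_j) = |1-z_j/z_k|^2.\<close>
definition Delta1 :: "nat \<Rightarrow> cpt \<Rightarrow> real \<Rightarrow> complex" where
  "Delta1 n z \<theta> = (\<Prod>k<n. \<Prod>j<k. complex_of_real ((cmod (1 - z j / z k))\<^sup>2 powr \<theta>))"

definition Delta2 :: "nat \<Rightarrow> nat \<Rightarrow> cpt \<Rightarrow> cpt \<Rightarrow> real \<Rightarrow> complex" where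
  "Delta2 n m z w \<theta> = Delta1 n z \<theta> * Delta1 m w (1 / \<theta>) /
      (\<Prod>j<n. \<Prod>k<m. (1 - z j / w k) * (1 - w k / z j))"

text \<open>Angle space [0,2pi]^n with product Lebesgue measure; z_j = xi e^{i phi_j},
  so d omega_n = (2 pi)^{-n} d phi_1 ... d phi_n.\<close>
definition angles :: "nat \<Rightarrow> (nat \<Rightarrow> real) measure" where
  "angles n = Pi\<^sub>M {..<n} (\<lambda>_. lebesgue_on {0..2*pi})"

definition torus_pt :: "real \<Rightarrow> (nat \<Rightarrow> real) \<Rightarrow> cpt" where
  "torus_pt \<xi> \<phi> = (\<lambda>j. complex_of_real \<xi> * cis (\<phi> j))"

definition pairing' :: "nat \<Rightarrow> nat \<Rightarrow> real \<Rightarrow> real \<Rightarrow> real \<Rightarrow>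
    (cpt \<Rightarrow> cpt \<Rightarrow> complex) \<Rightarrow> (cpt \<Rightarrow> cpt \<Rightarrow> complex) \<Rightarrow> complex" where
  "pairing' n m \<theta> \<xi> \<xi>' p q =
     complex_of_real (1 / (fact n * fact m) * (1 / (2 * pi)) ^ (n + m)) *
     (\<integral>\<phi>. (\<integral>\<psi>. Delta2 n m (torus_pt \<xi> \<phi>) (torus_pt \<xi>' \<psi>) \<theta>
                  * p (torus_pt \<xi> \<phi>) (torus_pt \<xi>' \<psi>)
                  * conj_fun q (torus_pt \<xi> \<phi>) (torus_pt \<xi>' \<psi>) \<partial>angles m) \<partial>angles n)"

end

theory Submission
  imports Defs "HOL-Complex_Analysis.Complex_Analysis"
begin

text \<open>In the coordinates z = s e^{i\<phi>}, w = e^{i\<psi>}/v the torus T_\<xi> \<times> T_\<xi>' is s = \<xi>,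
  v = 1/\<xi>'. The factors Delta_n and Delta_m only see the angles, p and q^* are polynomials
  in s, v, 1/s, 1/v, and the cross factors (1 - z_j/w_k)(1 - w_k/z_j) do not vanish while
  |s| |v| < 1. So the integrand is holomorphic in s on 0 < |s| < 1/|v| and in v on
  0 < |v| < 1/|s|. Multiplying s (or v) by e^{ia} amounts to rotating the angles, which
  preserves the measure; hence the torus integral equals its average over all rotations,
  which by Fubini is an integral of circle means of holomorphic functions on a punctured
  disc, and these do not depend on the radius by Cauchy's theorem. The integral is thus
  constant along both coordinate directions of the region s, v > 0, s v < 1, and any two
  points of that region are joined by such moves.\<close>

section \<open>Rotations of the angle space\<close>

definition angle_mod :: "real \<Rightarrow> real" where
  "angle_mod x = x - 2*pi * of_int \<lfloor>x / (2*pi)\<rfloor>"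

lemma angle_mod_bounds: "0 \<le> angle_mod x" "angle_mod x < 2*pi"
proof -
  have "of_int \<lfloor>x / (2*pi)\<rfloor> \<le> x / (2*pi)" by linarith
  then have "2*pi * of_int \<lfloor>x / (2*pi)\<rfloor> \<le> 2*pi * (x / (2*pi))"
    by (intro mult_left_mono) auto
  then show "0 \<le> angle_mod x" unfolding angle_mod_def by simp
  have "x / (2*pi) < of_int \<lfloor>x / (2*pi)\<rfloor> + 1" by linarith
  then have "2*pi * (x / (2*pi)) < 2*pi * (of_int \<lfloor>x / (2*pi)\<rfloor> + 1)"
    by (intro mult_strict_left_mono) auto
  then show "angle_mod x < 2*pi" unfolding angle_mod_def by (simp add: algebra_simps)
qed

lemma cis_angle_mod [simp]: "cis (angle_mod x) = cis x"
proof -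
  have "cis (angle_mod x) = cis x * cis (2*pi * of_int (- \<lfloor>x / (2*pi)\<rfloor>))"
    unfolding angle_mod_def by (simp add: cis_mult)
  also have "cis (2*pi * of_int (- \<lfloor>x / (2*pi)\<rfloor>)) = 1"
    by (rule cis_multiple_2pi) simp
  finally show ?thesis by simp
qed

lemma angle_mod_add_multiple: "angle_mod (x + 2*pi * of_int k) = angle_mod x"
proof -
  have "(x + 2*pi * of_int k) / (2*pi) = x / (2*pi) + of_int k"
    using pi_gt_zero by (simp add: field_simps)
  then show ?thesis unfolding angle_mod_def by (simp add: algebra_simps)
qed

lemma angle_mod_eq_self: "0 \<le> x \<Longrightarrow> x < 2*pi \<Longrightarrow> angle_mod x = x"
  unfolding angle_mod_def using pi_gt_zero by (simp add: floor_eq_iff field_simps)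

lemma angle_mod_add:
  assumes "0 \<le> x" "x \<le> 2*pi"
  shows "angle_mod (x + b) =
           (if x < 2*pi - angle_mod b then x + angle_mod b else x + angle_mod b - 2*pi)"
proof -
  have "angle_mod (x + b) = angle_mod ((x + angle_mod b) + 2*pi * of_int \<lfloor>b / (2*pi)\<rfloor>)"
    unfolding angle_mod_def by (simp add: algebra_simps)
  also have "\<dots> = angle_mod (x + angle_mod b)"
    by (rule angle_mod_add_multiple)
  finally have eq: "angle_mod (x + b) = angle_mod (x + angle_mod b)" .
  show ?thesis
  proof (cases "x < 2*pi - angle_mod b")
    case True
    then show ?thesis using eq angle_mod_eq_self angle_mod_bounds[of b] assms by auto
  next
    case False
    have "angle_mod (x + angle_mod b) = angle_mod ((x + angle_mod b - 2*pi) + 2*pi * of_int 1)"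
      by simp
    also have "\<dots> = x + angle_mod b - 2*pi"
      unfolding angle_mod_add_multiple using False angle_mod_bounds[of b] assms
      by (intro angle_mod_eq_self) auto
    finally show ?thesis using eq False by simp
  qed
qed

abbreviation angle_lebesgue :: "real measure" where
  "angle_lebesgue \<equiv> lebesgue_on {0..2*pi}"

text \<open>The endpoint 2 pi is left out; it is a null set.\<close>
lemma rotate_angle_preimage_eq:
  fixes b :: real
  assumes "A \<subseteq> {0..2*pi}"
  defines "g \<equiv> angle_mod b"
  shows "(\<lambda>x. angle_mod (x + b)) -` A \<inter> {0..<2*pi} =
           (\<lambda>x. x + (- g)) ` (A \<inter> {g..<2*pi}) \<union> (\<lambda>x. x + (2*pi - g)) ` (A \<inter> {0..<g})"
    (is "?P = ?P1 \<union> ?P2")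
proof (intro set_eqI iffI)
  fix x assume x: "x \<in> ?P"
  then have x0: "0 \<le> x" "x \<le> 2*pi" "x \<noteq> 2*pi" and xA: "angle_mod (x + b) \<in> A" by auto
  show "x \<in> ?P1 \<union> ?P2"
  proof (cases "x < 2*pi - g")
    case True
    then have "x + g \<in> A \<inter> {g..<2*pi}"
      using xA angle_mod_add[OF x0(1,2), of b] x0 unfolding g_def by auto
    then show ?thesis by (force intro: image_eqI[where x = "x + g"])
  next
    case False
    then have "x + g - 2*pi \<in> A \<inter> {0..<g}"
      using xA angle_mod_add[OF x0(1,2), of b] x0 unfolding g_def by auto
    then show ?thesis by (force intro: image_eqI[where x = "x + g - 2*pi"])
  qed
next
  have g: "0 \<le> g" "g < 2*pi" using angle_mod_bounds unfolding g_def by auto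
  fix x assume "x \<in> ?P1 \<union> ?P2"
  then obtain y where y: "y \<in> A"
    and "(g \<le> y \<and> y < 2*pi \<and> x = y - g) \<or> (0 \<le> y \<and> y < g \<and> x = y + (2*pi - g))"
    by auto
  then have "0 \<le> x" "x < 2*pi" "angle_mod (x + b) = y"
    using angle_mod_add[of x b] g unfolding g_def by auto
  then show "x \<in> ?P" using y by auto
qed

lemma rotate_angle_preimage:
  assumes A: "A \<in> sets lebesgue" "A \<subseteq> {0..2*pi}"
  shows "(\<lambda>x. angle_mod (x + b)) -` A \<inter> {0..2*pi} \<in> sets lebesgue"
    and "emeasure lebesgue ((\<lambda>x. angle_mod (x + b)) -` A \<inter> {0..2*pi}) = emeasure lebesgue A"
proof -
  define Q where "Q = (\<lambda>x. angle_mod (x + b)) -` A \<inter> {0..2*pi}"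
  define g where "g = angle_mod b"
  have g: "0 \<le> g" "g < 2*pi" using angle_mod_bounds unfolding g_def by auto
  define P1 where "P1 = (\<lambda>x. x + (- g)) ` (A \<inter> {g..<2*pi})"
  define P2 where "P2 = (\<lambda>x. x + (2*pi - g)) ` (A \<inter> {0..<g})"
  have transl: "(\<lambda>x. x + c) ` S = (+) c ` S" for c :: real and S
    by (auto simp: add.commute)
  have emeasure_transl: "emeasure lebesgue ((\<lambda>x. x + c) ` S) = emeasure lebesgue S"
    for c :: real and S
    using emeasure_lebesgue_affine[of 1 c S] by simp
  have null: "S \<inter> {2*pi} \<in> null_sets lebesgue" for S
    by (rule null_sets_completionI, rule finite_imp_null_set_lborel) auto
  have sets: "A \<inter> {g..<2*pi} \<in> sets lebesgue" "A \<inter> {0..<g} \<in> sets lebesgue" using A by auto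
  have P: "P1 \<in> sets lebesgue" "P2 \<in> sets lebesgue"
    using lebesgue_sets_translation[OF sets(1), of "- g"]
      lebesgue_sets_translation[OF sets(2), of "2*pi - g"]
    unfolding P1_def P2_def transl by auto
  have "Q = (\<lambda>x. angle_mod (x + b)) -` A \<inter> {0..<2*pi} \<union> Q \<inter> {2*pi}"
    unfolding Q_def by auto
  also have "(\<lambda>x. angle_mod (x + b)) -` A \<inter> {0..<2*pi} = P1 \<union> P2"
    unfolding P1_def P2_def g_def by (rule rotate_angle_preimage_eq[OF A(2)])
  finally have split: "Q = P1 \<union> P2 \<union> Q \<inter> {2*pi}" .
  have "P1 \<union> P2 \<union> Q \<inter> {2*pi} \<in> sets lebesgue"
    using P null[of Q] by (auto dest: null_setsD2)
  with split show "Q \<in> sets lebesgue" by simp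
  have "emeasure lebesgue Q = emeasure lebesgue (P1 \<union> P2 \<union> Q \<inter> {2*pi})"
    using split by (rule arg_cong)
  also have "\<dots> = emeasure lebesgue (P1 \<union> P2)"
    using P null by (intro emeasure_Un_null_set) auto
  also have "\<dots> = emeasure lebesgue P1 + emeasure lebesgue P2"
    using P g unfolding P1_def P2_def by (intro plus_emeasure[symmetric]) auto
  also have "\<dots> = emeasure lebesgue (A \<inter> {g..<2*pi}) + emeasure lebesgue (A \<inter> {0..<g})"
    unfolding P1_def P2_def emeasure_transl ..
  also have "\<dots> = emeasure lebesgue (A \<inter> {g..<2*pi} \<union> A \<inter> {0..<g})"
    using sets g by (intro plus_emeasure) auto
  also have "A \<inter> {g..<2*pi} \<union> A \<inter> {0..<g} = A - A \<inter> {2*pi}"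
    using A g by auto
  also have "emeasure lebesgue \<dots> = emeasure lebesgue A"
    using A null by (intro emeasure_Diff_null_set) auto
  finally show "emeasure lebesgue Q = emeasure lebesgue A" .
qed

lemma rotate_angle_measurable: "(\<lambda>x. angle_mod (x + b)) \<in> angle_lebesgue \<rightarrow>\<^sub>M angle_lebesgue"
proof (rule measurableI)
  show "angle_mod (x + b) \<in> space angle_lebesgue" for x
    using angle_mod_bounds[of "x + b"] by auto
next
  fix A assume "A \<in> sets angle_lebesgue"
  then have A: "A \<in> sets lebesgue" "A \<subseteq> {0..2*pi}" by (auto simp: sets_restrict_space_iff)
  show "(\<lambda>x. angle_mod (x + b)) -` A \<inter> space angle_lebesgue \<in> sets angle_lebesgue"
    using rotate_angle_preimage(1)[OF A, of b] by (auto simp: sets_restrict_space_iff)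
qed

lemma distr_rotate_angle: "distr angle_lebesgue angle_lebesgue (\<lambda>x. angle_mod (x + b)) = angle_lebesgue"
proof (rule measure_eqI)
  fix A assume "A \<in> sets (distr angle_lebesgue angle_lebesgue (\<lambda>x. angle_mod (x + b)))"
  then have A: "A \<in> sets lebesgue" "A \<subseteq> {0..2*pi}" by (auto simp: sets_restrict_space_iff)
  have "emeasure (distr angle_lebesgue angle_lebesgue (\<lambda>x. angle_mod (x + b))) A
      = emeasure angle_lebesgue ((\<lambda>x. angle_mod (x + b)) -` A \<inter> space angle_lebesgue)"
    using A by (intro emeasure_distr rotate_angle_measurable) (auto simp: sets_restrict_space_iff)
  also have "\<dots> = emeasure lebesgue ((\<lambda>x. angle_mod (x + b)) -` A \<inter> {0..2*pi})"
    using rotate_angle_preimage(1)[OF A, of b] by (subst emeasure_restrict_space) auto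
  also have "\<dots> = emeasure angle_lebesgue A"
    using A rotate_angle_preimage(2)[OF A, of b] by (subst emeasure_restrict_space) auto
  finally show "emeasure (distr angle_lebesgue angle_lebesgue (\<lambda>x. angle_mod (x + b))) A
      = emeasure angle_lebesgue A" .
qed simp

lemma finite_measure_angle_lebesgue: "finite_measure angle_lebesgue"
  by (simp add: finite_measure_lebesgue_on)

interpretation angle_product: product_sigma_finite "\<lambda>_::nat. angle_lebesgue"
  unfolding product_sigma_finite_def
  using finite_measure_angle_lebesgue finite_measure_def by blast

lemma finite_measure_angles: "finite_measure (angles n)"
proof (rule finite_measureI)
  have "emeasure (angles n) (space (angles n)) = (\<Prod>i<n. emeasure angle_lebesgue (space angle_lebesgue))"
    unfolding angles_def space_PiM by (intro angle_product.emeasure_PiM) auto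
  also have "\<dots> < \<infinity>"
    using finite_measure.emeasure_finite[OF finite_measure_angle_lebesgue]
    by (simp add: power_less_top_ennreal top.not_eq_extremum)
  finally show "emeasure (angles n) (space (angles n)) \<noteq> \<infinity>" by simp
qed

lemma sigma_finite_angles: "sigma_finite_measure (angles n)"
  using finite_measure_angles finite_measure_def by blast

definition rotate_angles :: "nat \<Rightarrow> real \<Rightarrow> (nat \<Rightarrow> real) \<Rightarrow> (nat \<Rightarrow> real)" where
  "rotate_angles n b \<phi> = (\<lambda>j\<in>{..<n}. angle_mod (\<phi> j + b))"

lemma rotate_angles_measurable: "rotate_angles n b \<in> angles n \<rightarrow>\<^sub>M angles n"
  unfolding rotate_angles_def angles_def
proof (intro measurable_restrict)
  fix j assume "j \<in> {..<n}"
  then show "(\<lambda>\<phi>. angle_mod (\<phi> j + b)) \<in> Pi\<^sub>M {..<n} (\<lambda>_. angle_lebesgue) \<rightarrow>\<^sub>M angle_lebesgue"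
    by (intro measurable_compose[OF _ rotate_angle_measurable] measurable_component_singleton)
qed

lemma distr_rotate_angles: "distr (angles n) (angles n) (rotate_angles n b) = angles n"
  unfolding angles_def
proof (rule angle_product.PiM_eqI)
  fix A assume A: "\<And>i. i \<in> {..<n} \<Longrightarrow> A i \<in> sets angle_lebesgue"
  let ?f = "\<lambda>x. angle_mod (x + b)"
  let ?M = "Pi\<^sub>M {..<n} (\<lambda>_. angle_lebesgue)"
  have pre: "rotate_angles n b -` Pi\<^sub>E {..<n} A \<inter> space ?M
      = Pi\<^sub>E {..<n} (\<lambda>i. ?f -` A i \<inter> space angle_lebesgue)"
    by (auto simp: rotate_angles_def space_PiM PiE_iff extensional_def)
  have "emeasure (distr ?M ?M (rotate_angles n b)) (Pi\<^sub>E {..<n} A)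
      = emeasure ?M (rotate_angles n b -` Pi\<^sub>E {..<n} A \<inter> space ?M)"
    using rotate_angles_measurable[of n b] A unfolding angles_def
    by (intro emeasure_distr) (auto intro!: sets_PiM_I_finite)
  also have "\<dots> = (\<Prod>i<n. emeasure angle_lebesgue (?f -` A i \<inter> space angle_lebesgue))"
    unfolding pre using A measurable_sets[OF rotate_angle_measurable]
    by (intro angle_product.emeasure_PiM) auto
  also have "\<dots> = (\<Prod>i<n. emeasure (distr angle_lebesgue angle_lebesgue ?f) (A i))"
    using A by (intro prod.cong refl emeasure_distr[symmetric] rotate_angle_measurable) auto
  also have "\<dots> = (\<Prod>i<n. emeasure angle_lebesgue (A i))"
    unfolding distr_rotate_angle ..
  finally show "emeasure (distr ?M ?M (rotate_angles n b)) (Pi\<^sub>E {..<n} A)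
      = (\<Prod>i<n. emeasure angle_lebesgue (A i))" .
qed simp_all

abbreviation angle_pairs :: "nat \<Rightarrow> nat \<Rightarrow> ((nat \<Rightarrow> real) \<times> (nat \<Rightarrow> real)) measure" where
  "angle_pairs n m \<equiv> angles n \<Otimes>\<^sub>M angles m"

lemma finite_measure_angle_pairs: "finite_measure (angle_pairs n m)"
  by (intro finite_measure_pair_measure finite_measure_angles)

lemma rotate_first_angles_measurable:
  "(\<lambda>(\<phi>, \<psi>). (rotate_angles n a \<phi>, \<psi>)) \<in> angle_pairs n m \<rightarrow>\<^sub>M angle_pairs n m"
  unfolding split_beta'
  by (rule measurable_Pair[OF measurable_compose[OF measurable_fst rotate_angles_measurable] measurable_snd])

lemma rotate_second_angles_measurable:
  "(\<lambda>(\<phi>, \<psi>). (\<phi>, rotate_angles m a \<psi>)) \<in> angle_pairs n m \<rightarrow>\<^sub>M angle_pairs n m"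
  unfolding split_beta'
  by (rule measurable_Pair[OF measurable_fst measurable_compose[OF measurable_snd rotate_angles_measurable]])

lemma distr_rotate_first_angles:
  "distr (angle_pairs n m) (angle_pairs n m) (\<lambda>(\<phi>, \<psi>). (rotate_angles n a \<phi>, \<psi>)) = angle_pairs n m"
proof -
  have "distr (angles n) (angles n) (rotate_angles n a) \<Otimes>\<^sub>M distr (angles m) (angles m) (\<lambda>x. x)
      = distr (angle_pairs n m) (angle_pairs n m) (\<lambda>(\<phi>, \<psi>). (rotate_angles n a \<phi>, \<psi>))"
    by (rule pair_measure_distr[OF rotate_angles_measurable measurable_ident_sets[OF refl]])
       (simp add: sigma_finite_angles)
  then show ?thesis by (simp add: distr_rotate_angles)
qed

lemma distr_rotate_second_angles:
  "distr (angle_pairs n m) (angle_pairs n m) (\<lambda>(\<phi>, \<psi>). (\<phi>, rotate_angles m a \<psi>)) = angle_pairs n m"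
proof -
  have "distr (angles n) (angles n) (\<lambda>x. x) \<Otimes>\<^sub>M distr (angles m) (angles m) (rotate_angles m a)
      = distr (angle_pairs n m) (angle_pairs n m) (\<lambda>(\<phi>, \<psi>). (\<phi>, rotate_angles m a \<psi>))"
    by (rule pair_measure_distr[OF measurable_ident_sets[OF refl] rotate_angles_measurable])
       (simp add: distr_rotate_angles sigma_finite_angles)
  then show ?thesis by (simp add: distr_rotate_angles)
qed

section \<open>Circle means of holomorphic functions\<close>

lemma contour_integral_circlepath_div:
  fixes f :: "complex \<Rightarrow> complex"
  assumes hol: "f holomorphic_on ball 0 R - {0}" and t: "0 < t" "t < R"
  shows "contour_integral (circlepath 0 t) (\<lambda>s. f s / s) = \<i> * (\<integral>a. f (t * cis a) \<partial>angle_lebesgue)"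
proof -
  have cont: "continuous_on {0..2*pi} (\<lambda>a. f (t * cis a))"
  proof (rule continuous_on_compose2[OF holomorphic_on_imp_continuous_on[OF hol]])
    show "continuous_on {0..2*pi} (\<lambda>a. complex_of_real t * cis a)" by (intro continuous_intros)
    show "(\<lambda>a. complex_of_real t * cis a) ` {0..2*pi} \<subseteq> ball 0 R - {0}"
      using t by (auto simp: norm_mult)
  qed
  have "contour_integral (circlepath 0 t) (\<lambda>s. f s / s) =
        integral {0..2*pi} (\<lambda>x. f (0 + t * cis x) / (0 + t * cis x) * t * \<i> * cis x)"
    unfolding circlepath_def by (rule contour_integral_part_circlepath_eq) simp
  also have "\<dots> = integral {0..2*pi} (\<lambda>x. \<i> * f (t * cis x))"
    using t by (intro integral_cong) (simp add: field_simps)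
  also have "\<dots> = (\<integral>x. \<i> * f (t * cis x) \<partial>angle_lebesgue)"
    by (intro integral_unique has_integral_integral_lebesgue_on continuous_imp_integrable_real
          continuous_intros cont) auto
  finally show ?thesis by simp
qed

lemma circle_mean_eq:
  fixes f :: "complex \<Rightarrow> complex" and t1 t2 :: real
  assumes hol: "f holomorphic_on ball 0 R - {0}"
    and t: "0 < t1" "t1 < R" "0 < t2" "t2 < R"
  shows "(\<integral>a. f (t1 * cis a) \<partial>angle_lebesgue) = (\<integral>a. f (t2 * cis a) \<partial>angle_lebesgue)"
proof -
  have hol': "(\<lambda>s. f s / s) holomorphic_on ball 0 R - {0}"
    using hol by (intro holomorphic_intros) auto
  have circles: "contour_integral (circlepath 0 a) (\<lambda>s. f s / s) = contour_integral (circlepath 0 b) (\<lambda>s. f s / s)"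
    if "0 < a" "a \<le> b" "b < R" for a b
  proof -
    have "cball 0 b \<subseteq> ball (0::complex) R" using that by (auto simp: cball_subset_ball_iff)
    from contour_integral_circlepath_eq(3)[OF open_ball hol' that(1,2) this] show ?thesis
      by (rule sym)
  qed
  have "contour_integral (circlepath 0 t1) (\<lambda>s. f s / s) = contour_integral (circlepath 0 t2) (\<lambda>s. f s / s)"
  proof (cases "t1 \<le> t2")
    case True
    then show ?thesis using circles t(1,4) by blast
  next
    case False
    then show ?thesis using circles[of t2 t1] t(2,3) by simp
  qed
  then show ?thesis
    unfolding contour_integral_circlepath_div[OF hol t(1,2)] contour_integral_circlepath_div[OF hol t(3,4)]
    by simp
qed

text \<open>By the invariance of X the integral equals its average over all rotations of s;
  by Fubini that average is an integral of circle means, which do not depend on the radius.\<close>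
lemma integral_radius_invariant:
  fixes F :: "complex \<Rightarrow> 'a \<Rightarrow> complex" and X :: "'a measure" and t1 t2 :: real
  assumes fin: "finite_measure X"
    and hol: "\<And>x. x \<in> space X \<Longrightarrow> (\<lambda>s. F s x) holomorphic_on ball 0 R - {0}"
    and T: "\<And>a. T a \<in> X \<rightarrow>\<^sub>M X" "\<And>a. distr X X (T a) = X"
    and rot: "\<And>(t::real) a x. 0 < t \<Longrightarrow> t < R \<Longrightarrow> x \<in> space X \<Longrightarrow> F (t * cis a) x = F t (T a x)"
    and meas: "\<And>t::real. 0 < t \<Longrightarrow> t < R \<Longrightarrow> F t \<in> borel_measurable X"
    and int: "\<And>t::real. 0 < t \<Longrightarrow> t < R \<Longrightarrow>
                integrable (angle_lebesgue \<Otimes>\<^sub>M X) (\<lambda>(a, x). F (t * cis a) x)"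
    and t: "0 < t1" "t1 < R" "0 < t2" "t2 < R"
  shows "integral\<^sup>L X (F t1) = integral\<^sup>L X (F t2)"
proof -
  interpret pair_sigma_finite angle_lebesgue X
    by (intro pair_sigma_finite.intro finite_measure.axioms(1) finite_measure_angle_lebesgue fin)
  have rotated: "integral\<^sup>L X (F (t * cis a)) = integral\<^sup>L X (F t)" if "0 < t" "t < R" for t a
  proof -
    have "integral\<^sup>L X (F (t * cis a)) = (\<integral>x. F t (T a x) \<partial>X)"
      using rot[OF that] by (intro Bochner_Integration.integral_cong) auto
    also have "\<dots> = integral\<^sup>L (distr X X (T a)) (F t)"
      by (rule integral_distr[symmetric, OF T(1) meas[OF that]])
    finally show ?thesis unfolding T(2) .
  qed
  have mean: "integral\<^sup>L X (F t) = (\<integral>x. (\<integral>a. F (t * cis a) x \<partial>angle_lebesgue) \<partial>X) / (2*pi)"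
    if "0 < t" "t < R" for t
  proof -
    have "(\<integral>x. (\<integral>a. F (t * cis a) x \<partial>angle_lebesgue) \<partial>X)
        = (\<integral>a. integral\<^sup>L X (F (t * cis a)) \<partial>angle_lebesgue)"
      using Fubini_integral[of "\<lambda>a x. F (t * cis a) x"] int[OF that] by simp
    also have "\<dots> = (\<integral>a. integral\<^sup>L X (F t) \<partial>angle_lebesgue)"
      by (simp only: rotated[OF that])
    also have "\<dots> = 2*pi * integral\<^sup>L X (F t)"
      by (simp add: measure_restrict_space scaleR_conv_of_real)
    finally show ?thesis by simp
  qed
  have "(\<integral>x. (\<integral>a. F (t1 * cis a) x \<partial>angle_lebesgue) \<partial>X) = (\<integral>x. (\<integral>a. F (t2 * cis a) x \<partial>angle_lebesgue) \<partial>X)"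
    using circle_mean_eq[OF hol t] by (rule Bochner_Integration.integral_cong[OF refl])
  then show ?thesis
    unfolding mean[OF t(1,2)] mean[OF t(3,4)] by (simp only:)
qed

lemma poly_funE:
  assumes "poly_fun n m p"
  obtains E c where "finite E"
    "\<And>z w. p z w = (\<Sum>e\<in>E. c e * (\<Prod>j<n. z j ^ fst e j) * (\<Prod>k<m. w k ^ snd e k))"
  using assms unfolding poly_fun_def by blast

lemma poly_fun_cong:
  assumes "poly_fun n m p" "\<And>j. j < n \<Longrightarrow> z j = z' j" "\<And>k. k < m \<Longrightarrow> w k = w' k"
  shows "p z w = p z' w'"
proof -
  obtain E c where E: "finite E"
    "\<And>z w. p z w = (\<Sum>e\<in>E. c e * (\<Prod>j<n. z j ^ fst e j) * (\<Prod>k<m. w k ^ snd e k))"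
    using poly_funE[OF assms(1)] by blast
  show ?thesis unfolding E(2) using assms(2,3)
    by (intro sum.cong refl arg_cong2[where f="(*)"] prod.cong) auto
qed

lemma poly_fun_conj_coeffs:
  assumes "poly_fun n m q"
  shows "poly_fun n m (\<lambda>z w. cnj (q (\<lambda>j. cnj (z j)) (\<lambda>k. cnj (w k))))"
proof -
  obtain E c where E: "finite E"
    "\<And>z w. q z w = (\<Sum>e\<in>E. c e * (\<Prod>j<n. z j ^ fst e j) * (\<Prod>k<m. w k ^ snd e k))"
    using poly_funE[OF assms(1)] by blast
  show ?thesis unfolding poly_fun_def
    by (rule exI[of _ E], rule exI[of _ "\<lambda>e. cnj (c e)"]) (simp add: E)
qed

lemma holomorphic_on_poly_fun:
  assumes "poly_fun n m p"
    and "\<And>j. j < n \<Longrightarrow> (\<lambda>s. Z s j) holomorphic_on S"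
    and "\<And>k. k < m \<Longrightarrow> (\<lambda>s. W s k) holomorphic_on S"
  shows "(\<lambda>s. p (Z s) (W s)) holomorphic_on S"
proof -
  obtain E c where E: "finite E"
    "\<And>z w. p z w = (\<Sum>e\<in>E. c e * (\<Prod>j<n. z j ^ fst e j) * (\<Prod>k<m. w k ^ snd e k))"
    using poly_funE[OF assms(1)] by blast
  show ?thesis unfolding E(2) using assms(2,3)
    by (intro holomorphic_intros) auto
qed

lemma holomorphic_on_cnj_poly_fun:
  assumes "poly_fun n m q"
    and "\<And>j. j < n \<Longrightarrow> (\<lambda>s. cnj (Z s j)) holomorphic_on S"
    and "\<And>k. k < m \<Longrightarrow> (\<lambda>s. cnj (W s k)) holomorphic_on S"
  shows "(\<lambda>s. cnj (q (Z s) (W s))) holomorphic_on S"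
proof -
  have "(\<lambda>s. (\<lambda>z w. cnj (q (\<lambda>j. cnj (z j)) (\<lambda>k. cnj (w k)))) (\<lambda>j. cnj (Z s j)) (\<lambda>k. cnj (W s k)))
         holomorphic_on S"
    by (rule holomorphic_on_poly_fun[OF poly_fun_conj_coeffs[OF assms(1)]]) (use assms(2,3) in auto)
  thus ?thesis by simp
qed

lemma borel_measurable_poly_fun:
  assumes "poly_fun n m p"
    and "\<And>j. j < n \<Longrightarrow> (\<lambda>y. Z y j) \<in> borel_measurable M"
    and "\<And>k. k < m \<Longrightarrow> (\<lambda>y. W y k) \<in> borel_measurable M"
  shows "(\<lambda>y. p (Z y) (W y)) \<in> borel_measurable M"
proof -
  obtain E c where E: "finite E"
    "\<And>z w. p z w = (\<Sum>e\<in>E. c e * (\<Prod>j<n. z j ^ fst e j) * (\<Prod>k<m. w k ^ snd e k))"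
    using poly_funE[OF assms(1)] by blast
  show ?thesis unfolding E(2) using assms(2,3)
    by (intro borel_measurable_sum borel_measurable_times borel_measurable_prod borel_measurable_power
         borel_measurable_const) auto
qed

lemma poly_fun_bounded:
  assumes "poly_fun n m p" "0 \<le> R1" "0 \<le> R2"
  obtains B where "\<And>z w. (\<And>j. j < n \<Longrightarrow> cmod (z j) \<le> R1) \<Longrightarrow> (\<And>k. k < m \<Longrightarrow> cmod (w k) \<le> R2)
      \<Longrightarrow> cmod (p z w) \<le> B"
proof -
  obtain E c where E: "finite E"
    "\<And>z w. p z w = (\<Sum>e\<in>E. c e * (\<Prod>j<n. z j ^ fst e j) * (\<Prod>k<m. w k ^ snd e k))"
    using poly_funE[OF assms(1)] by blast
  define B where "B = (\<Sum>e\<in>E. cmod (c e) * (\<Prod>j<n. R1 ^ fst e j) * (\<Prod>k<m. R2 ^ snd e k))"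
  have "cmod (p z w) \<le> B" if z: "\<And>j. j < n \<Longrightarrow> cmod (z j) \<le> R1" and w: "\<And>k. k < m \<Longrightarrow> cmod (w k) \<le> R2" for z w
  proof -
    have "cmod (p z w) \<le> (\<Sum>e\<in>E. cmod (c e * (\<Prod>j<n. z j ^ fst e j) * (\<Prod>k<m. w k ^ snd e k)))"
      unfolding E(2) by (rule norm_sum)
    also have "\<dots> \<le> B" unfolding B_def
    proof (rule sum_mono)
      fix e assume "e \<in> E"
      have 1: "cmod (\<Prod>j<n. z j ^ fst e j) \<le> (\<Prod>j<n. R1 ^ fst e j)"
        unfolding prod_norm[symmetric] norm_power using z by (intro prod_mono conjI power_mono) auto
      have 2: "cmod (\<Prod>k<m. w k ^ snd e k) \<le> (\<Prod>k<m. R2 ^ snd e k)"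
        unfolding prod_norm[symmetric] norm_power using w by (intro prod_mono conjI power_mono) auto
      show "cmod (c e * (\<Prod>j<n. z j ^ fst e j) * (\<Prod>k<m. w k ^ snd e k))
            \<le> cmod (c e) * (\<Prod>j<n. R1 ^ fst e j) * (\<Prod>k<m. R2 ^ snd e k)"
        unfolding norm_mult using 1 2
        using assms(2,3) by (intro mult_mono) (auto intro!: mult_nonneg_nonneg prod_nonneg)
    qed
    finally show ?thesis .
  qed
  thus ?thesis using that by blast
qed

section \<open>The integrand in rotation coordinates\<close>

text \<open>The integrand of pairing' at z = s e^{i\<phi>}, w = e^{i\<psi>}/v; q^* evaluates q at
  (1/cnj z, 1/cnj w), which is the second point below.\<close>
definition torus_integrand :: "nat \<Rightarrow> nat \<Rightarrow> real \<Rightarrow> (cpt \<Rightarrow> cpt \<Rightarrow> complex) \<Rightarrow>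
    (cpt \<Rightarrow> cpt \<Rightarrow> complex) \<Rightarrow> complex \<Rightarrow> complex \<Rightarrow> (nat \<Rightarrow> real) \<Rightarrow> (nat \<Rightarrow> real) \<Rightarrow> complex" where
  "torus_integrand n m \<theta> p q s v \<phi> \<psi> =
     Delta2 n m (\<lambda>j. s * cis (\<phi> j)) (\<lambda>k. cis (\<psi> k) / v) \<theta>
       * p (\<lambda>j. s * cis (\<phi> j)) (\<lambda>k. cis (\<psi> k) / v)
       * cnj (q (\<lambda>j. cis (\<phi> j) / cnj s) (\<lambda>k. cnj v * cis (\<psi> k)))"

lemma torus_integrand_torus_pt:
  assumes "0 < \<xi>" "0 < \<xi>'"
  shows "Delta2 n m (torus_pt \<xi> \<phi>) (torus_pt \<xi>' \<psi>) \<theta> * p (torus_pt \<xi> \<phi>) (torus_pt \<xi>' \<psi>)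
           * conj_fun q (torus_pt \<xi> \<phi>) (torus_pt \<xi>' \<psi>)
         = torus_integrand n m \<theta> p q \<xi> (complex_of_real (1/\<xi>')) \<phi> \<psi>"
proof -
  have unit: "cnj (cis x) * cis x = 1" for x by (simp add: cis_cnj cis_mult)
  have w: "torus_pt \<xi>' \<psi> = (\<lambda>k. cis (\<psi> k) / complex_of_real (1/\<xi>'))"
    unfolding torus_pt_def by auto
  have z_inv: "(\<lambda>j. 1 / cnj (torus_pt \<xi> \<phi> j)) = (\<lambda>j. cis (\<phi> j) / cnj (complex_of_real \<xi>))"
    using unit assms unfolding torus_pt_def by (auto simp: field_simps)
  have w_inv: "(\<lambda>k. 1 / cnj (torus_pt \<xi>' \<psi> k)) = (\<lambda>k. cnj (complex_of_real (1/\<xi>')) * cis (\<psi> k))"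
    using unit assms unfolding torus_pt_def by (auto simp: field_simps)
  have z: "(\<lambda>j. complex_of_real \<xi> * cis (\<phi> j)) = torus_pt \<xi> \<phi>"
    by (simp add: torus_pt_def)
  show ?thesis
    unfolding torus_integrand_def conj_fun_def z_inv w_inv z w[symmetric] ..
qed

lemma Delta1_cong: "(\<And>j. j < n \<Longrightarrow> z j = z' j) \<Longrightarrow> Delta1 n z \<theta> = Delta1 n z' \<theta>"
  unfolding Delta1_def by (intro prod.cong refl) auto

lemma Delta2_cong:
  "(\<And>j. j < n \<Longrightarrow> z j = z' j) \<Longrightarrow> (\<And>k. k < m \<Longrightarrow> w k = w' k) \<Longrightarrow>
    Delta2 n m z w \<theta> = Delta2 n m z' w' \<theta>"
  unfolding Delta2_def
  by (intro arg_cong2[where f = "(/)"] arg_cong2[where f = "(*)"] Delta1_cong prod.cong refl) auto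

lemma torus_integrand_cong:
  assumes p: "poly_fun n m p" and q: "poly_fun n m q"
    and \<phi>: "\<And>j. j < n \<Longrightarrow> cis (\<phi> j) = cis (\<phi>' j)"
    and \<psi>: "\<And>k. k < m \<Longrightarrow> cis (\<psi> k) = cis (\<psi>' k)"
  shows "torus_integrand n m \<theta> p q s v \<phi> \<psi> = torus_integrand n m \<theta> p q s v \<phi>' \<psi>'"
proof -
  have "Delta2 n m (\<lambda>j. s * cis (\<phi> j)) (\<lambda>k. cis (\<psi> k) / v) \<theta>
      = Delta2 n m (\<lambda>j. s * cis (\<phi>' j)) (\<lambda>k. cis (\<psi>' k) / v) \<theta>"
    using \<phi> \<psi> by (intro Delta2_cong) auto
  moreover have "p (\<lambda>j. s * cis (\<phi> j)) (\<lambda>k. cis (\<psi> k) / v) = p (\<lambda>j. s * cis (\<phi>' j)) (\<lambda>k. cis (\<psi>' k) / v)"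
    using \<phi> \<psi> by (intro poly_fun_cong[OF p]) auto
  moreover have "q (\<lambda>j. cis (\<phi> j) / cnj s) (\<lambda>k. cnj v * cis (\<psi> k))
      = q (\<lambda>j. cis (\<phi>' j) / cnj s) (\<lambda>k. cnj v * cis (\<psi>' k))"
    using \<phi> \<psi> by (intro poly_fun_cong[OF q]) auto
  ultimately show ?thesis unfolding torus_integrand_def by simp
qed

lemma torus_integrand_rotate_s:
  "torus_integrand n m \<theta> p q (s * cis a) v \<phi> \<psi> = torus_integrand n m \<theta> p q s v (\<lambda>j. \<phi> j + a) \<psi>"
proof -
  have z: "(\<lambda>j. s * cis a * cis (\<phi> j)) = (\<lambda>j. s * cis (\<phi> j + a))"
    by (auto simp: cis_mult add.commute)
  have z_inv: "(\<lambda>j. cis (\<phi> j) / cnj (s * cis a)) = (\<lambda>j. cis (\<phi> j + a) / cnj s)"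
  proof
    fix j
    have "cnj (s * cis a) = cnj s * cis (-a)" by (simp add: cis_cnj)
    moreover have "cis (\<phi> j) / cis (-a) = cis (\<phi> j + a)"
      using cis_divide[of "\<phi> j" "-a"] by simp
    ultimately show "cis (\<phi> j) / cnj (s * cis a) = cis (\<phi> j + a) / cnj s"
      by (metis divide_divide_eq_left mult.commute)
  qed
  show ?thesis unfolding torus_integrand_def z z_inv ..
qed

lemma torus_integrand_rotate_v:
  "torus_integrand n m \<theta> p q s (v * cis a) \<phi> \<psi> = torus_integrand n m \<theta> p q s v \<phi> (\<lambda>k. \<psi> k - a)"
proof -
  have w: "(\<lambda>k. cis (\<psi> k) / (v * cis a)) = (\<lambda>k. cis (\<psi> k - a) / v)"
  proof
    fix k
    have "cis (\<psi> k) / cis a = cis (\<psi> k - a)" by (simp add: cis_divide)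
    then show "cis (\<psi> k) / (v * cis a) = cis (\<psi> k - a) / v"
      by (metis divide_divide_eq_left mult.commute)
  qed
  have w_inv: "(\<lambda>k. cnj (v * cis a) * cis (\<psi> k)) = (\<lambda>k. cnj v * cis (\<psi> k - a))"
  proof
    fix k
    have "cis (-a) * cis (\<psi> k) = cis (\<psi> k - a)" by (simp add: cis_mult)
    then show "cnj (v * cis a) * cis (\<psi> k) = cnj v * cis (\<psi> k - a)"
      by (simp add: cis_cnj mult.assoc)
  qed
  show ?thesis unfolding torus_integrand_def w w_inv ..
qed

definition cross_denominator ::
    "nat \<Rightarrow> nat \<Rightarrow> complex \<Rightarrow> complex \<Rightarrow> (nat \<Rightarrow> real) \<Rightarrow> (nat \<Rightarrow> real) \<Rightarrow> complex" where
  "cross_denominator n m s v \<phi> \<psi> =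
     (\<Prod>j<n. \<Prod>k<m. (1 - s * cis (\<phi> j) / (cis (\<psi> k) / v)) * (1 - cis (\<psi> k) / v / (s * cis (\<phi> j))))"

lemma Delta1_mult_const: "s \<noteq> 0 \<Longrightarrow> Delta1 n (\<lambda>j. s * c j) \<theta> = Delta1 n c \<theta>"
  unfolding Delta1_def by (intro prod.cong refl) simp

lemma Delta1_divide_const: assumes "v \<noteq> 0" shows "Delta1 n (\<lambda>j. c j / v) \<theta> = Delta1 n c \<theta>"
  unfolding Delta1_def
proof (intro prod.cong refl)
  fix k j
  have "c j / v / (c k / v) = c j / c k" using assms by (cases "c k = 0") (simp_all add: field_simps)
  thus "complex_of_real ((cmod (1 - c j / v / (c k / v)))\<^sup>2 powr \<theta>) =
        complex_of_real ((cmod (1 - c j / c k))\<^sup>2 powr \<theta>)" by (simp only:)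
qed

lemma cross_factor_nonzero:
  assumes "s \<noteq> 0" "v \<noteq> 0" "cmod s * cmod v < 1"
  shows "(1 - s * cis a / (cis b / v)) * (1 - cis b / v / (s * cis a)) \<noteq> 0"
proof -
  have "cmod (s * cis a / (cis b / v)) < 1" "1 < cmod (cis b / v / (s * cis a))"
    using assms by (simp_all add: norm_mult norm_divide field_simps)
  then show ?thesis by auto
qed

lemma cross_denominator_nonzero:
  assumes "s \<noteq> 0" "v \<noteq> 0" "cmod s * cmod v < 1"
  shows "cross_denominator n m s v \<phi> \<psi> \<noteq> 0"
  unfolding cross_denominator_def using cross_factor_nonzero[OF assms]
  by (simp only: prod_zero_iff finite_lessThan) blast

lemma torus_integrand_factored:
  assumes "s \<noteq> 0" "v \<noteq> 0"
  shows "torus_integrand n m \<theta> p q s v \<phi> \<psi> = Delta1 n (\<lambda>j. cis (\<phi> j)) \<theta> * Delta1 m (\<lambda>k. cis (\<psi> k)) (1/\<theta>)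
      / cross_denominator n m s v \<phi> \<psi> * p (\<lambda>j. s * cis (\<phi> j)) (\<lambda>k. cis (\<psi> k) / v)
      * cnj (q (\<lambda>j. cis (\<phi> j) / cnj s) (\<lambda>k. cnj v * cis (\<psi> k)))"
  unfolding torus_integrand_def Delta2_def cross_denominator_def Delta1_mult_const[OF assms(1)] Delta1_divide_const[OF assms(2)] ..

lemma holomorphic_torus_integrand:
  assumes p: "poly_fun n m p" and q: "poly_fun n m q"
    and S: "S holomorphic_on U" and V: "V holomorphic_on U"
    and nonzero: "\<And>u. u \<in> U \<Longrightarrow> S u \<noteq> 0" "\<And>u. u \<in> U \<Longrightarrow> V u \<noteq> 0"
    and small: "\<And>u. u \<in> U \<Longrightarrow> cmod (S u) * cmod (V u) < 1"
  shows "(\<lambda>u. torus_integrand n m \<theta> p q (S u) (V u) \<phi> \<psi>) holomorphic_on U"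
proof -
  have "(\<lambda>u. Delta1 n (\<lambda>j. cis (\<phi> j)) \<theta> * Delta1 m (\<lambda>k. cis (\<psi> k)) (1/\<theta>)
      / cross_denominator n m (S u) (V u) \<phi> \<psi> * p (\<lambda>j. S u * cis (\<phi> j)) (\<lambda>k. cis (\<psi> k) / V u)
      * cnj (q (\<lambda>j. cis (\<phi> j) / cnj (S u)) (\<lambda>k. cnj (V u) * cis (\<psi> k)))) holomorphic_on U"
  proof (intro holomorphic_intros)
    show "(\<lambda>u. cross_denominator n m (S u) (V u) \<phi> \<psi>) holomorphic_on U"
      unfolding cross_denominator_def using S V nonzero by (intro holomorphic_intros) auto
    show "cross_denominator n m (S u) (V u) \<phi> \<psi> \<noteq> 0" if "u \<in> U" for u
      using cross_denominator_nonzero nonzero small that by blast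
    show "(\<lambda>u. p (\<lambda>j. S u * cis (\<phi> j)) (\<lambda>k. cis (\<psi> k) / V u)) holomorphic_on U"
      by (rule holomorphic_on_poly_fun[OF p]) (use S V nonzero in \<open>auto intro!: holomorphic_intros\<close>)
    show "(\<lambda>u. cnj (q (\<lambda>j. cis (\<phi> j) / cnj (S u)) (\<lambda>k. cnj (V u) * cis (\<psi> k)))) holomorphic_on U"
    proof (rule holomorphic_on_cnj_poly_fun[OF q])
      have "(\<lambda>u. cnj (cis (\<phi> j)) / S u) holomorphic_on U" for j
        using S nonzero by (intro holomorphic_intros) auto
      then show "(\<lambda>u. cnj (cis (\<phi> j) / cnj (S u))) holomorphic_on U" for j
        by simp
      have "(\<lambda>u. V u * cnj (cis (\<psi> k))) holomorphic_on U" for k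
        using V by (intro holomorphic_intros)
      then show "(\<lambda>u. cnj (cnj (V u) * cis (\<psi> k))) holomorphic_on U" for k
        by simp
    qed
  qed
  then show ?thesis
    by (rule holomorphic_cong[THEN iffD1, rotated 2]) (use nonzero torus_integrand_factored in auto)
qed

lemma borel_measurable_torus_integrand:
  assumes p: "poly_fun n m p" and q: "poly_fun n m q"
    and S[measurable]: "S \<in> borel_measurable M" and V[measurable]: "V \<in> borel_measurable M"
    and Phi: "\<And>j. j < n \<Longrightarrow> (\<lambda>y. \<Phi> y j) \<in> borel_measurable M"
    and Psi: "\<And>k. k < m \<Longrightarrow> (\<lambda>y. \<Psi> y k) \<in> borel_measurable M"
  shows "(\<lambda>y. torus_integrand n m \<theta> p q (S y) (V y) (\<Phi> y) (\<Psi> y)) \<in> borel_measurable M"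
proof -
  have cis_Phi[measurable]: "(\<lambda>y. cis (\<Phi> y j)) \<in> borel_measurable M" if "j < n" for j
    by (rule measurable_compose[OF Phi[OF that] borel_measurable_continuous_onI]) (intro continuous_intros)
  have cis_Psi[measurable]: "(\<lambda>y. cis (\<Psi> y k)) \<in> borel_measurable M" if "k < m" for k
    by (rule measurable_compose[OF Psi[OF that] borel_measurable_continuous_onI]) (intro continuous_intros)
  have cS[measurable]: "(\<lambda>y. cnj (S y)) \<in> borel_measurable M"
    by (rule measurable_compose[OF S borel_measurable_continuous_onI]) (intro continuous_intros)
  have cV[measurable]: "(\<lambda>y. cnj (V y)) \<in> borel_measurable M"
    by (rule measurable_compose[OF V borel_measurable_continuous_onI]) (intro continuous_intros)
  have D1: "(\<lambda>y. Delta1 n (\<lambda>j. S y * cis (\<Phi> y j)) \<theta>) \<in> borel_measurable M"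
    unfolding Delta1_def
    by (intro borel_measurable_prod) measurable
  have D2: "(\<lambda>y. Delta1 m (\<lambda>k. cis (\<Psi> y k) / V y) (1/\<theta>)) \<in> borel_measurable M"
    unfolding Delta1_def
    by (intro borel_measurable_prod) measurable
  have D3: "(\<lambda>y. (\<Prod>j<n. \<Prod>k<m. (1 - S y * cis (\<Phi> y j) / (cis (\<Psi> y k) / V y)) *
              (1 - cis (\<Psi> y k) / V y / (S y * cis (\<Phi> y j))))) \<in> borel_measurable M"
    by (intro borel_measurable_prod) measurable
  have P: "(\<lambda>y. p (\<lambda>j. S y * cis (\<Phi> y j)) (\<lambda>k. cis (\<Psi> y k) / V y)) \<in> borel_measurable M"
    by (rule borel_measurable_poly_fun[OF p]) measurable
  have Q: "(\<lambda>y. q (\<lambda>j. cis (\<Phi> y j) / cnj (S y)) (\<lambda>k. cnj (V y) * cis (\<Psi> y k))) \<in> borel_measurable M"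
    by (rule borel_measurable_poly_fun[OF q]) measurable
  have cnj_Q: "(\<lambda>y. cnj (q (\<lambda>j. cis (\<Phi> y j) / cnj (S y)) (\<lambda>k. cnj (V y) * cis (\<Psi> y k)))) \<in> borel_measurable M"
    by (rule measurable_compose[OF Q borel_measurable_continuous_onI]) (intro continuous_intros)
  show ?thesis unfolding torus_integrand_def Delta2_def
    using D1 D2 D3 P cnj_Q by measurable
qed

lemma norm_Delta1_cis_le:
  assumes "0 \<le> \<theta>"
  shows "cmod (Delta1 n (\<lambda>j. cis (\<phi> j)) \<theta>) \<le> (\<Prod>k<n. \<Prod>j<k. 4 powr \<theta>)"
  unfolding Delta1_def prod_norm[symmetric]
proof (intro prod_mono conjI)
  fix k j
  have "cmod (1 - cis (\<phi> j) / cis (\<phi> k)) \<le> cmod 1 + cmod (cis (\<phi> j) / cis (\<phi> k))"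
    by (rule norm_triangle_ineq4)
  hence c2: "cmod (1 - cis (\<phi> j) / cis (\<phi> k)) \<le> 2" by (simp add: norm_divide)
  have "(cmod (1 - cis (\<phi> j) / cis (\<phi> k)))\<^sup>2 \<le> 2\<^sup>2"
    by (rule power_mono[OF c2]) simp
  hence "(cmod (1 - cis (\<phi> j) / cis (\<phi> k)))\<^sup>2 powr \<theta> \<le> 4 powr \<theta>"
    using assms by (intro powr_mono2) auto
  thus "cmod (complex_of_real ((cmod (1 - cis (\<phi> j) / cis (\<phi> k)))\<^sup>2 powr \<theta>)) \<le> 4 powr \<theta>"
    by simp
qed (auto intro!: prod_nonneg)

lemma cross_denominator_lower_bound:
  assumes "cmod s = t" "cmod v = r" "0 < t" "0 < r" "t * r < 1"
  shows "(\<Prod>j<n. \<Prod>k<m. (1 - t * r) * (1 / (t * r) - 1)) \<le> cmod (cross_denominator n m s v \<phi> \<psi>)"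
proof -
  have nonneg: "0 \<le> 1 - t * r" "0 \<le> 1 / (t * r) - 1"
    using assms by (auto simp: field_simps)
  have factor: "(1 - t * r) * (1 / (t * r) - 1)
      \<le> cmod ((1 - s * cis (\<phi> j) / (cis (\<psi> k) / v)) * (1 - cis (\<psi> k) / v / (s * cis (\<phi> j))))"
    for j k
  proof -
    have "cmod (s * cis (\<phi> j) / (cis (\<psi> k) / v)) = t * r"
      "cmod (cis (\<psi> k) / v / (s * cis (\<phi> j))) = 1 / (t * r)"
      using assms by (simp_all add: norm_mult norm_divide)
    then have "1 - t * r \<le> cmod (1 - s * cis (\<phi> j) / (cis (\<psi> k) / v))"
      "1 / (t * r) - 1 \<le> cmod (1 - cis (\<psi> k) / v / (s * cis (\<phi> j)))"
      using norm_triangle_ineq2[of 1 "s * cis (\<phi> j) / (cis (\<psi> k) / v)"]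
        norm_triangle_ineq2[of "cis (\<psi> k) / v / (s * cis (\<phi> j))" 1]
      by (simp_all add: norm_minus_commute)
    then show ?thesis unfolding norm_mult using nonneg by (intro mult_mono) auto
  qed
  show ?thesis
    unfolding cross_denominator_def prod_norm[symmetric] using nonneg factor
    by (intro prod_mono conjI prod_nonneg mult_nonneg_nonneg) auto
qed

lemma norm_Delta_quotient_le:
  assumes "0 < \<theta>" "cmod s = t" "cmod v = r" "0 < t" "0 < r" "t * r < 1"
  shows "cmod (Delta1 n (\<lambda>j. cis (\<phi> j)) \<theta> * Delta1 m (\<lambda>k. cis (\<psi> k)) (1/\<theta>)
             / cross_denominator n m s v \<phi> \<psi>)
         \<le> (\<Prod>k<n. \<Prod>j<k. 4 powr \<theta>) * (\<Prod>k<m. \<Prod>j<k. 4 powr (1/\<theta>))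
             / (\<Prod>j<n. \<Prod>k<m. (1 - t * r) * (1 / (t * r) - 1))"
proof -
  have "0 < (1 - t * r) * (1 / (t * r) - 1)"
    using assms by (intro mult_pos_pos) (auto simp: field_simps)
  then have "0 < (\<Prod>j<n. \<Prod>k<m. (1 - t * r) * (1 / (t * r) - 1))"
    by (intro prod_pos) auto
  moreover have "cmod (Delta1 n (\<lambda>j. cis (\<phi> j)) \<theta> * Delta1 m (\<lambda>k. cis (\<psi> k)) (1/\<theta>))
      \<le> (\<Prod>k<n. \<Prod>j<k. 4 powr \<theta>) * (\<Prod>k<m. \<Prod>j<k. 4 powr (1/\<theta>))"
    unfolding norm_mult using assms(1)
    by (intro mult_mono norm_Delta1_cis_le prod_nonneg norm_ge_zero) auto
  ultimately show ?thesis
    unfolding norm_divide using cross_denominator_lower_bound[OF assms(2-6)]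
    by (intro frac_le) (auto intro: order_trans[OF norm_ge_zero])
qed

lemma torus_integrand_bounded:
  assumes p: "poly_fun n m p" and q: "poly_fun n m q" and \<theta>: "0 < \<theta>"
    and tr: "0 < t" "0 < r" "t * r < 1"
  obtains B where "\<And>s v \<phi> \<psi>. cmod s = t \<Longrightarrow> cmod v = r \<Longrightarrow>
    cmod (torus_integrand n m \<theta> p q s v \<phi> \<psi>) \<le> B"
proof -
  obtain BP where BP: "\<And>z w. (\<And>j. j < n \<Longrightarrow> cmod (z j) \<le> t) \<Longrightarrow> (\<And>k. k < m \<Longrightarrow> cmod (w k) \<le> 1/r)
      \<Longrightarrow> cmod (p z w) \<le> BP"
    using poly_fun_bounded[OF p, of t "1/r"] tr by auto
  obtain BQ where BQ: "\<And>z w. (\<And>j. j < n \<Longrightarrow> cmod (z j) \<le> 1/t) \<Longrightarrow> (\<And>k. k < m \<Longrightarrow> cmod (w k) \<le> r)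
      \<Longrightarrow> cmod (q z w) \<le> BQ"
    using poly_fun_bounded[OF q, of "1/t" r] tr by auto
  define C where "C = (\<Prod>k<n. \<Prod>j<k. 4 powr \<theta>) * (\<Prod>k<m. \<Prod>j<k. 4 powr (1/\<theta>))
             / (\<Prod>j<n. \<Prod>k<m. (1 - t * r) * (1 / (t * r) - 1))"
  have "cmod (torus_integrand n m \<theta> p q s v \<phi> \<psi>) \<le> C * BP * BQ"
    if s: "cmod s = t" and v: "cmod v = r" for s v \<phi> \<psi>
  proof -
    have sv: "s \<noteq> 0" "v \<noteq> 0" using s v tr by auto
    have "cmod (p (\<lambda>j. s * cis (\<phi> j)) (\<lambda>k. cis (\<psi> k) / v)) \<le> BP"
      using s v tr by (intro BP) (auto simp: norm_mult norm_divide)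
    moreover have "cmod (cnj (q (\<lambda>j. cis (\<phi> j) / cnj s) (\<lambda>k. cnj v * cis (\<psi> k)))) \<le> BQ"
      unfolding complex_mod_cnj using s v tr by (intro BQ) (auto simp: norm_mult norm_divide)
    moreover have "cmod (Delta1 n (\<lambda>j. cis (\<phi> j)) \<theta> * Delta1 m (\<lambda>k. cis (\<psi> k)) (1/\<theta>)
        / cross_denominator n m s v \<phi> \<psi>) \<le> C"
      unfolding C_def by (rule norm_Delta_quotient_le[OF \<theta> s v tr])
    ultimately show ?thesis unfolding torus_integrand_factored[OF sv] norm_mult
      by (intro mult_mono mult_nonneg_nonneg) (auto intro: order_trans[OF norm_ge_zero])
  qed
  then show ?thesis using that by blast
qed

section \<open>Independence of the radii\<close>

lemma borel_measurable_angles_component: "j < n \<Longrightarrow> (\<lambda>\<phi>. \<phi> j) \<in> borel_measurable (angles n)"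
  unfolding angles_def
  by (rule measurable_compose[OF measurable_component_singleton[of j "{..<n}" "\<lambda>_. angle_lebesgue"]
        continuous_imp_measurable_on_sets_lebesgue]) (auto intro: continuous_intros)

lemma borel_measurable_angle_lebesgue: "continuous_on UNIV f \<Longrightarrow> f \<in> borel_measurable angle_lebesgue"
  by (rule continuous_imp_measurable_on_sets_lebesgue) (auto intro: continuous_on_subset)

lemma integrable_torus_integrand:
  assumes p: "poly_fun n m p" and q: "poly_fun n m q" and \<theta>: "0 < \<theta>"
    and fin: "finite_measure M" and tr: "0 < t" "0 < r" "t * r < 1"
    and meas: "S \<in> borel_measurable M" "V \<in> borel_measurable M"
      "\<And>j. j < n \<Longrightarrow> (\<lambda>y. \<Phi> y j) \<in> borel_measurable M"
      "\<And>k. k < m \<Longrightarrow> (\<lambda>y. \<Psi> y k) \<in> borel_measurable M"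
    and norms: "\<And>y. y \<in> space M \<Longrightarrow> cmod (S y) = t" "\<And>y. y \<in> space M \<Longrightarrow> cmod (V y) = r"
  shows "integrable M (\<lambda>y. torus_integrand n m \<theta> p q (S y) (V y) (\<Phi> y) (\<Psi> y))"
proof -
  obtain B where "\<And>s v \<phi> \<psi>. cmod s = t \<Longrightarrow> cmod v = r \<Longrightarrow>
      cmod (torus_integrand n m \<theta> p q s v \<phi> \<psi>) \<le> B"
    using torus_integrand_bounded[OF p q \<theta> tr] by blast
  then show ?thesis
    using norms borel_measurable_torus_integrand[OF p q meas]
    by (intro finite_measure.integrable_const_bound[OF fin, where B = B]) auto
qed

definition torus_mean :: "nat \<Rightarrow> nat \<Rightarrow> real \<Rightarrow> (cpt \<Rightarrow> cpt \<Rightarrow> complex) \<Rightarrow>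
    (cpt \<Rightarrow> cpt \<Rightarrow> complex) \<Rightarrow> complex \<Rightarrow> complex \<Rightarrow> complex" where
  "torus_mean n m \<theta> p q s v = (\<integral>x. torus_integrand n m \<theta> p q s v (fst x) (snd x) \<partial>angle_pairs n m)"

lemma pairing'_eq_torus_mean:
  assumes p: "poly_fun n m p" and q: "poly_fun n m q" and \<theta>: "0 < \<theta>"
    and \<xi>: "0 < \<xi>" "\<xi> < \<xi>'"
  shows "pairing' n m \<theta> \<xi> \<xi>' p q =
     complex_of_real (1 / (fact n * fact m) * (1 / (2 * pi)) ^ (n + m)) * torus_mean n m \<theta> p q \<xi> (complex_of_real (1/\<xi>'))"
proof -
  interpret pair_sigma_finite "angles n" "angles m"
    by (intro pair_sigma_finite.intro sigma_finite_angles)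
  have int: "integrable (angle_pairs n m) (\<lambda>x. torus_integrand n m \<theta> p q \<xi> (complex_of_real (1/\<xi>')) (fst x) (snd x))"
    using \<xi> by (intro integrable_torus_integrand[OF p q \<theta> finite_measure_angle_pairs, where t = \<xi> and r = "1/\<xi>'"])
      (auto simp: field_simps norm_divide intro: borel_measurable_angles_component
        measurable_compose[OF measurable_fst] measurable_compose[OF measurable_snd])
  have "(\<integral>\<phi>. (\<integral>\<psi>. torus_integrand n m \<theta> p q \<xi> (complex_of_real (1/\<xi>')) \<phi> \<psi> \<partial>angles m) \<partial>angles n)
      = torus_mean n m \<theta> p q \<xi> (complex_of_real (1/\<xi>'))"
    unfolding torus_mean_def using integral_fst'[OF int] by simp
  then show ?thesis
    unfolding pairing'_def using \<xi> by (simp only: torus_integrand_torus_pt)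
qed

lemma borel_measurable_angle_pairs_component:
  "j < n \<Longrightarrow> (\<lambda>x. fst x j) \<in> borel_measurable (angle_pairs n m)"
  "k < m \<Longrightarrow> (\<lambda>x. snd x k) \<in> borel_measurable (angle_pairs n m)"
  by (auto intro: measurable_compose[OF measurable_fst] measurable_compose[OF measurable_snd]
        borel_measurable_angles_component)

lemma torus_mean_radius_s:
  fixes v t1 t2 :: real
  assumes p: "poly_fun n m p" and q: "poly_fun n m q" and \<theta>: "0 < \<theta>"
    and "0 < v" "0 < t1" "t1 * v < 1" "0 < t2" "t2 * v < 1"
  shows "torus_mean n m \<theta> p q t1 v = torus_mean n m \<theta> p q t2 v"
  unfolding torus_mean_def
proof (rule integral_radius_invariant[where R = "1/v"
      and F = "\<lambda>s x. torus_integrand n m \<theta> p q s v (fst x) (snd x)"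
      and T = "\<lambda>a (\<phi>, \<psi>). (rotate_angles n a \<phi>, \<psi>)"])
  show "(\<lambda>s. torus_integrand n m \<theta> p q s v (fst x) (snd x)) holomorphic_on ball 0 (1/v) - {0}" for x
    using \<open>0 < v\<close>
    by (intro holomorphic_torus_integrand[where S = "\<lambda>s. s" and V = "\<lambda>_. v", OF p q])
      (auto simp: field_simps intro: holomorphic_intros)
  show "torus_integrand n m \<theta> p q (t * cis a) v (fst x) (snd x)
      = torus_integrand n m \<theta> p q t v (fst ((\<lambda>(\<phi>, \<psi>). (rotate_angles n a \<phi>, \<psi>)) x))
          (snd ((\<lambda>(\<phi>, \<psi>). (rotate_angles n a \<phi>, \<psi>)) x))" for t :: real and a x
    unfolding torus_integrand_rotate_s
    by (cases x) (auto intro!: torus_integrand_cong[OF p q] simp: rotate_angles_def)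
  show "(\<lambda>x. torus_integrand n m \<theta> p q t v (fst x) (snd x)) \<in> borel_measurable (angle_pairs n m)"
    for t :: real
    by (intro borel_measurable_torus_integrand[OF p q] borel_measurable_angle_pairs_component
        borel_measurable_const)
  show "integrable (angle_lebesgue \<Otimes>\<^sub>M angle_pairs n m)
      (\<lambda>(a, x). torus_integrand n m \<theta> p q (t * cis a) v (fst x) (snd x))"
    if "0 < t" "t < 1/v" for t :: real
    unfolding case_prod_beta
    using that \<open>0 < v\<close>
    by (intro integrable_torus_integrand[OF p q \<theta>, where t = t and r = v]
        finite_measure_pair_measure finite_measure_angle_lebesgue finite_measure_angles
        borel_measurable_const measurable_compose[OF measurable_snd borel_measurable_angle_pairs_component(1)]
        measurable_compose[OF measurable_snd borel_measurable_angle_pairs_component(2)]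
        measurable_compose[OF measurable_fst borel_measurable_angle_lebesgue] continuous_intros)
      (auto simp: norm_mult field_simps)
qed (use assms in \<open>auto simp: field_simps intro: finite_measure_angle_pairs
      rotate_first_angles_measurable distr_rotate_first_angles\<close>)

lemma torus_mean_radius_v:
  fixes t v1 v2 :: real
  assumes p: "poly_fun n m p" and q: "poly_fun n m q" and \<theta>: "0 < \<theta>"
    and "0 < t" "0 < v1" "t * v1 < 1" "0 < v2" "t * v2 < 1"
  shows "torus_mean n m \<theta> p q t v1 = torus_mean n m \<theta> p q t v2"
  unfolding torus_mean_def
proof (rule integral_radius_invariant[where R = "1/t"
      and F = "\<lambda>v x. torus_integrand n m \<theta> p q t v (fst x) (snd x)"
      and T = "\<lambda>a (\<phi>, \<psi>). (\<phi>, rotate_angles m (- a) \<psi>)"])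
  show "(\<lambda>v. torus_integrand n m \<theta> p q t v (fst x) (snd x)) holomorphic_on ball 0 (1/t) - {0}" for x
    using \<open>0 < t\<close>
    by (intro holomorphic_torus_integrand[where S = "\<lambda>_. t" and V = "\<lambda>v. v", OF p q])
      (auto simp: field_simps intro: holomorphic_intros)
  show "torus_integrand n m \<theta> p q t (v * cis a) (fst x) (snd x)
      = torus_integrand n m \<theta> p q t v (fst ((\<lambda>(\<phi>, \<psi>). (\<phi>, rotate_angles m (- a) \<psi>)) x))
          (snd ((\<lambda>(\<phi>, \<psi>). (\<phi>, rotate_angles m (- a) \<psi>)) x))" for v :: real and a x
    unfolding torus_integrand_rotate_v
    by (cases x) (auto intro!: torus_integrand_cong[OF p q] simp: rotate_angles_def)
  show "(\<lambda>x. torus_integrand n m \<theta> p q t v (fst x) (snd x)) \<in> borel_measurable (angle_pairs n m)"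
    for v :: real
    by (intro borel_measurable_torus_integrand[OF p q] borel_measurable_angle_pairs_component
        borel_measurable_const)
  show "integrable (angle_lebesgue \<Otimes>\<^sub>M angle_pairs n m)
      (\<lambda>(a, x). torus_integrand n m \<theta> p q t (v * cis a) (fst x) (snd x))"
    if "0 < v" "v < 1/t" for v :: real
    unfolding case_prod_beta
    using that \<open>0 < t\<close>
    by (intro integrable_torus_integrand[OF p q \<theta>, where t = t and r = v]
        finite_measure_pair_measure finite_measure_angle_lebesgue finite_measure_angles
        borel_measurable_const measurable_compose[OF measurable_snd borel_measurable_angle_pairs_component(1)]
        measurable_compose[OF measurable_snd borel_measurable_angle_pairs_component(2)]
        measurable_compose[OF measurable_fst borel_measurable_angle_lebesgue] continuous_intros)
      (auto simp: norm_mult field_simps)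
qed (use assms in \<open>auto simp: field_simps intro: finite_measure_angle_pairs
      rotate_second_angles_measurable distr_rotate_second_angles\<close>)

lemma torus_mean_eq:
  fixes t1 r1 t2 r2 :: real
  assumes p: "poly_fun n m p" and q: "poly_fun n m q" and \<theta>: "0 < \<theta>"
    and "0 < t1" "0 < r1" "t1 * r1 < 1" "0 < t2" "0 < r2" "t2 * r2 < 1"
  shows "torus_mean n m \<theta> p q t1 r1 = torus_mean n m \<theta> p q t2 r2"
proof -
  define t where "t = min t1 t2"
  have "t * r1 \<le> t1 * r1" "t * r2 \<le> t2 * r2"
    using assms unfolding t_def by (auto intro: mult_right_mono)
  then have "t * r1 < 1" "t * r2 < 1"
    using assms by linarith+
  then have "torus_mean n m \<theta> p q t1 r1 = torus_mean n m \<theta> p q t r1"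
    and "torus_mean n m \<theta> p q t r1 = torus_mean n m \<theta> p q t r2"
    and "torus_mean n m \<theta> p q t r2 = torus_mean n m \<theta> p q t2 r2"
    using assms unfolding t_def
    by (auto intro: torus_mean_radius_s[OF p q \<theta>] torus_mean_radius_v[OF p q \<theta>])
  then show ?thesis by simp
qed

theorem lemma3p2:
  fixes n m :: nat and \<theta> :: real and p q :: "cpt \<Rightarrow> cpt \<Rightarrow> complex"
  assumes "n \<ge> 1" and "m \<ge> 1" and "\<theta> > 0"
    and "p \<in> Lambda n m \<theta>" and "q \<in> Lambda n m \<theta>"
    and "0 < \<xi>1" and "\<xi>1 < \<xi>1'" and "0 < \<xi>2" and "\<xi>2 < \<xi>2'"
  shows "pairing' n m \<theta> \<xi>1 \<xi>1' p q = pairing' n m \<theta> \<xi>2 \<xi>2' p q"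
proof -
  have p: "poly_fun n m p" and q: "poly_fun n m q"
    using assms(4,5) unfolding Lambda_def by auto
  have "torus_mean n m \<theta> p q \<xi>1 (1/\<xi>1') = torus_mean n m \<theta> p q \<xi>2 (1/\<xi>2')"
    using assms by (intro torus_mean_eq[OF p q]) (auto simp: field_simps)
  then show ?thesis
    unfolding pairing'_eq_torus_mean[OF p q assms(3,6,7)] pairing'_eq_torus_mean[OF p q assms(3,8,9)]
    by simp
qed

end
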